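(* Consider the initial value problem $\dot p=f(p,q)$, $\dot q=g(p,q)$, $p(t_0)=p_0$, $q(t_0)=q_0$ with smooth $f,g$ and $C^\infty$ solution $(p(t),q(t))$, and a partitioned linear multistep method of order $r$ as described in the context, with local truncation error constants $c_{j,p},c_{j,q}$. Let $e_{j,1,p},e_{j,1,q}$ ($j=r,\dots,2r-1$) be the smooth coefficient functions associated to the root $1$ in the asymptotic expansion of the global error, which satisfy $$\frac{d}{dt}\begin{pmatrix}e_{j,1,p}(t)\\ e_{j,1,q}(t)\end{pmatrix}=\begin{pmatrix}f_p&f_q\\ g_p&g_q\end{pmatrix}(p(t),q(t))\begin{pmatrix}e_{j,1,p}(t)\\ e_{j,1,q}(t)\end{pmatrix}-\begin{pmatrix}c_{j,p}p^{(j+1)}(t)\\ c_{j,q}q^{(j+1)}(t)\end{pmatrix},$$ and define the smooth part of the numerical solution $$\begin{pmatrix}p_h(t)\\ q_h(t)\end{pmatrix}=\begin{pmatrix}p(t)\\ q(t)\end{pmatrix}+\sum_{j=r}^{2r-1}h^j\begin{pmatrix}e_{j,1,p}(t)\\ e_{j,1,q}(t)\end{pmatrix}.$$ Let $I$ be a smooth invariant of the system (i.e. $I(p(t),q(t))$ is constant along every solution). Then $$\frac{d}{dt}I(p_h(t),q_h(t))=-\sum_{j=r}^{2r-1}h^j\,\nabla I(p(t),q(t))^T\begin{pmatrix}c_{j,p}p^{(j+1)}(t)\\ c_{j,q}q^{(j+1)}(t)\end{pmatrix}+O(h^{2r}).$$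
   Context: The method is $\rho_p(E)p_n=h\sigma_p(E)f(p_n,q_n)$, $\rho_q(E)q_n=h\sigma_q(E)g(p_n,q_n)$, with $E$ the shift operator, $t_n=nh$, both methods zero-stable of order $r$, with local truncation errors $\rho_\alpha(E)y(t_n)-h\sigma_\alpha(E)\dot y(t_n)=\sigma_\alpha(E)(\sum_{j=r}^{2r-1}c_{j,\alpha}h^{j+1}y^{(j+1)}(t_n))+O(h^{2r+1})$, $\alpha\in\{p,q\}$, for smooth $y$. $p\in\mathbb{R}^d$, $q\in\mathbb{R}^{n-d}$; $f_p,f_q,g_p,g_q$ denote partial Jacobians. *)

theory Defs
  imports "HOL-Analysis.Analysis"
begin

primrec Ck :: "nat \<Rightarrow> ('a::euclidean_space \<Rightarrow> 'b::real_normed_vector) \<Rightarrow> bool" where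
  "Ck 0 F = continuous_on UNIV F"
| "Ck (Suc k) F = ((\<forall>x. F differentiable (at x)) \<and>
      (\<forall>i\<in>Basis. Ck k (\<lambda>x. frechet_derivative F (at x) i)))"

definition smooth_map :: "('a::euclidean_space \<Rightarrow> 'b::real_normed_vector) \<Rightarrow> bool" where
  "smooth_map F \<longleftrightarrow> (\<forall>k. Ck k F)"

primrec vderivs :: "real set \<Rightarrow> nat \<Rightarrow> (real \<Rightarrow> 'a::real_normed_vector) \<Rightarrow> real \<Rightarrow> 'a" where
  "vderivs S 0 y = y"
| "vderivs S (Suc k) y = (\<lambda>t. vector_derivative (vderivs S k y) (at t within S))"

definition smooth_curve_on :: "real set \<Rightarrow> (real \<Rightarrow> 'a::real_normed_vector) \<Rightarrow> bool" where
  "smooth_curve_on S y \<longleftrightarrow>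
     (\<forall>k. \<forall>t\<in>S. (vderivs S k y has_vector_derivative vderivs S (Suc k) y t) (at t within S))"

definition is_invariant :: "('a::euclidean_space \<Rightarrow> 'a) \<Rightarrow> ('a \<Rightarrow> real) \<Rightarrow> bool" where
  "is_invariant F I \<longleftrightarrow>
     (\<forall>(z::real \<Rightarrow> 'a) J. is_interval J \<longrightarrow>
        (\<forall>t\<in>J. (z has_vector_derivative F (z t)) (at t within J)) \<longrightarrow>
        (\<forall>s\<in>J. \<forall>t\<in>J. I (z s) = I (z t)))"

end

theory Submission
  imports Defs
begin

(*
  First, an invariant I of z' = F z satisfies DI(x) (F x) = 0 at every point x,
  not only along the given solution: a local solution passes through every point (Picard iteration,
  here the Banach fixed point theorem), and I is constant along it.

  Second, with z = (p, q), E = (SUM j. h^j e_j) and W_j = (c_{j,p} p^(j+1), c_{j,q} q^(j+1)), the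
  derivative of I (z + E) is DI(z + E) (F z + DF(z) E - SUM j. h^j W_j). Subtracting
  DI(z + E) (F (z + E)) = 0 leaves the Taylor remainder F (z + E) - F z - DF(z) E = O(|E|^2) and
  the variation DI(z + E) - DI(z) = O(|E|), so the derivative is -(SUM j. h^j DI(z) W_j) up to
  O(|E|^2 + |E| h^r), and |E| = O(h^r).
*)

lemma Ck_has_derivative:
  assumes "Ck (Suc k) G"
  shows "(G has_derivative frechet_derivative G (at x)) (at x)"
  using assms frechet_derivative_works by auto

lemma Ck_Suc_imp_Ck:
  fixes G :: "'a::euclidean_space \<Rightarrow> 'b::real_normed_vector"
  assumes "Ck (Suc k) G"
  shows "Ck k G"
  using assms
proof (induction k arbitrary: G)
  case 0
  then show ?case by (auto intro: differentiable_imp_continuous_on simp: differentiable_on_def)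
next
  case (Suc k)
  then show ?case by (metis Ck.simps(2))
qed

lemma linear_norm_le_sum_Basis:
  fixes l :: "'a::euclidean_space \<Rightarrow> 'b::real_normed_vector"
  assumes "linear l"
  shows "norm (l v) \<le> norm v * (\<Sum>i\<in>Basis. norm (l i))"
proof -
  have "l v = l (\<Sum>i\<in>Basis. (v \<bullet> i) *\<^sub>R i)" by (simp add: euclidean_representation)
  also have "\<dots> = (\<Sum>i\<in>Basis. (v \<bullet> i) *\<^sub>R l i)"
    using assms by (simp add: linear_sum linear_scale)
  finally have "norm (l v) \<le> (\<Sum>i\<in>Basis. norm ((v \<bullet> i) *\<^sub>R l i))"
    using norm_sum by metis
  also have "\<dots> \<le> (\<Sum>i\<in>Basis. norm v * norm (l i))"
    by (intro sum_mono) (simp add: Basis_le_norm mult_right_mono)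
  finally show ?thesis by (simp add: sum_distrib_left)
qed

lemma Ck_frechet_derivative_bounded:
  fixes G :: "'a::euclidean_space \<Rightarrow> 'b::real_normed_vector"
  assumes "Ck 1 G" and "compact K"
  shows "\<exists>B\<ge>0. \<forall>x\<in>K. \<forall>v. norm (frechet_derivative G (at x) v) \<le> B * norm v"
proof -
  define s where "s x = (\<Sum>i\<in>Basis. norm (frechet_derivative G (at x) i))" for x
  have "continuous_on K s"
  proof -
    have "continuous_on UNIV (\<lambda>x. frechet_derivative G (at x) i)" if "i \<in> Basis" for i
      using assms(1) that by simp
    then show ?thesis
      unfolding s_def by (intro continuous_on_sum continuous_on_norm) (auto intro: continuous_on_subset)
  qed
  then have "bounded (s ` K)"
    using assms(2) by (intro compact_imp_bounded compact_continuous_image)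
  then obtain B where B: "B > 0" "\<And>x. x \<in> K \<Longrightarrow> norm (s x) \<le> B"
    by (auto simp: bounded_pos)
  have "norm (frechet_derivative G (at x) v) \<le> B * norm v" if "x \<in> K" for x v
  proof -
    have "linear (frechet_derivative G (at x))"
      using Ck_has_derivative[of 0 G x] assms(1) has_derivative_linear by auto
    then have "norm (frechet_derivative G (at x) v) \<le> norm v * s x"
      unfolding s_def by (rule linear_norm_le_sum_Basis)
    also have "\<dots> \<le> norm v * B" using B(2)[OF that] by (intro mult_left_mono) auto
    finally show ?thesis by (simp add: mult.commute)
  qed
  then show ?thesis using B(1) by (intro exI[of _ B]) auto
qed

lemma Ck_lipschitz_on:
  fixes G :: "'a::euclidean_space \<Rightarrow> 'b::real_normed_vector"
  assumes "Ck 1 G" and "compact K" and "convex K"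
  shows "\<exists>L. L-lipschitz_on K G"
proof -
  obtain B where B: "B \<ge> 0" "\<forall>x\<in>K. \<forall>v. norm (frechet_derivative G (at x) v) \<le> B * norm v"
    using Ck_frechet_derivative_bounded[OF assms(1,2)] by blast
  have "B-lipschitz_on K G"
  proof (rule bounded_derivative_imp_lipschitz[OF _ assms(3) _ B(1)])
    show "(G has_derivative frechet_derivative G (at x)) (at x within K)" for x
      using Ck_has_derivative[of 0 G x] assms(1) by (auto intro: has_derivative_at_withinI)
    show "onorm (frechet_derivative G (at x)) \<le> B" if "x \<in> K" for x
      using B(2) that by (intro onorm_le) auto
  qed
  then show ?thesis ..
qed

lemma Ck_frechet_derivative_lipschitz:
  fixes G :: "'a::euclidean_space \<Rightarrow> 'b::real_normed_vector"
  assumes "Ck 2 G" and "compact K" and "convex K"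
  shows "\<exists>L\<ge>0. \<forall>x\<in>K. \<forall>y\<in>K. \<forall>v.
    norm (frechet_derivative G (at x) v - frechet_derivative G (at y) v) \<le> L * norm (x - y) * norm v"
proof -
  have C2: "Ck (Suc (Suc 0)) G" using assms(1) by (simp add: numeral_2_eq_2)
  have "\<forall>i\<in>Basis. \<exists>L. L-lipschitz_on K (\<lambda>x. frechet_derivative G (at x) i)"
    using C2 assms(2,3) by (auto intro!: Ck_lipschitz_on)
  then obtain L where L: "\<And>i. i \<in> Basis \<Longrightarrow> (L i)-lipschitz_on K (\<lambda>x. frechet_derivative G (at x) i)"
    by metis
  have "norm (frechet_derivative G (at x) v - frechet_derivative G (at y) v)
      \<le> (\<Sum>i\<in>Basis. L i) * norm (x - y) * norm v" if xy: "x \<in> K" "y \<in> K" for x y v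
  proof -
    have "linear (frechet_derivative G (at x))" "linear (frechet_derivative G (at y))"
      using Ck_has_derivative[of 1 G] C2 has_derivative_linear by auto
    then have "norm (frechet_derivative G (at x) v - frechet_derivative G (at y) v)
       \<le> norm v * (\<Sum>i\<in>Basis. norm (frechet_derivative G (at x) i - frechet_derivative G (at y) i))"
      by (intro linear_norm_le_sum_Basis linear_compose_sub)
    also have "\<dots> \<le> norm v * (\<Sum>i\<in>Basis. L i * norm (x - y))"
    proof (intro mult_left_mono sum_mono)
      fix i :: 'a assume "i \<in> Basis"
      from lipschitz_onD[OF L[OF this] xy]
      show "norm (frechet_derivative G (at x) i - frechet_derivative G (at y) i) \<le> L i * norm (x - y)"
        by (simp add: dist_norm)
    qed simp
    finally show ?thesis by (simp add: sum_distrib_right mult_ac)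
  qed
  moreover have "(\<Sum>i\<in>Basis. L i) \<ge> 0"
    using L lipschitz_on_nonneg by (intro sum_nonneg) blast
  ultimately show ?thesis by blast
qed

lemma has_derivative_remainder_le:
  fixes G :: "'a::{real_normed_vector,perfect_space} \<Rightarrow> 'b::real_normed_vector"
  assumes deriv: "\<And>y. y \<in> S \<Longrightarrow> (G has_derivative D y) (at y within S)"
    and S: "convex S" "x \<in> S" "x + e \<in> S"
    and lip: "\<And>y v. y \<in> S \<Longrightarrow> norm (D y v - D x v) \<le> L * norm (y - x) * norm v"
    and L: "L \<ge> 0"
  shows "norm (G (x + e) - G x - D x e) \<le> L * norm e ^ 2"
proof -
  have lin: "bounded_linear (D x)" using deriv[OF S(2)] has_derivative_bounded_linear by blast
  define T where "T = closed_segment x (x + e)"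
  have T: "T \<subseteq> S" unfolding T_def using S by (simp add: closed_segment_subset)
  have "norm ((G (x + e) - D x (x + e)) - (G x - D x x)) \<le> (L * norm e) * norm ((x + e) - x)"
  proof (rule differentiable_bound[where S = T and f' = "\<lambda>y v. D y v - D x v"])
    show "((\<lambda>y. G y - D x y) has_derivative (\<lambda>v. D y v - D x v)) (at y within T)" if "y \<in> T" for y
      using deriv T that lin
      by (intro has_derivative_diff bounded_linear_imp_has_derivative) (auto intro: has_derivative_subset)
    show "onorm (\<lambda>v. D y v - D x v) \<le> L * norm e" if y: "y \<in> T" for y
    proof (rule onorm_le)
      fix v :: 'a
      have "norm (y - x) \<le> norm e"
        using segment_bound1[OF y[unfolded T_def]] by simp
      then have "L * norm (y - x) * norm v \<le> L * norm e * norm v"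
        using L by (intro mult_right_mono mult_left_mono) auto
      then show "norm (D y v - D x v) \<le> L * norm e * norm v"
        using lip[of y v] T y by auto
    qed
  qed (auto simp: T_def)
  moreover have "(G (x + e) - D x (x + e)) - (G x - D x x) = G (x + e) - G x - D x e"
    using lin by (simp add: linear_simps bounded_linear.linear)
  ultimately show ?thesis by (simp add: power2_eq_square mult_ac)
qed

lemma frechet_derivative_Pair:
  assumes "f differentiable (at x)" and "g differentiable (at x)"
  shows "frechet_derivative (\<lambda>z. (f z, g z)) (at x)
       = (\<lambda>v. (frechet_derivative f (at x) v, frechet_derivative g (at x) v))"
  using assms by (intro frechet_derivative_at[symmetric] has_derivative_Pair)
    (simp_all add: frechet_derivative_works[symmetric])

lemma Ck_Pair:
  fixes f :: "'a::euclidean_space \<Rightarrow> 'b::real_normed_vector" and g :: "'a \<Rightarrow> 'c::real_normed_vector"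
  assumes "Ck k f" and "Ck k g"
  shows "Ck k (\<lambda>z. (f z, g z))"
  using assms
proof (induction k arbitrary: f g)
  case 0
  then show ?case by (simp add: continuous_on_Pair)
next
  case (Suc k)
  then have diff: "f differentiable (at x)" "g differentiable (at x)" for x by auto
  moreover have "Ck k (\<lambda>x. frechet_derivative (\<lambda>z. (f z, g z)) (at x) i)" if "i \<in> Basis" for i
    using Suc that by (simp add: frechet_derivative_Pair[OF diff])
  ultimately show ?case by simp
qed

text \<open>Time is clamped to \<open>[0, d]\<close>, so that the Picard map acts on the complete space of
  bounded continuous functions on the whole real line.\<close>

definition picard_step :: "('a::banach \<Rightarrow> 'a) \<Rightarrow> 'a \<Rightarrow> real \<Rightarrow> (real \<Rightarrow>\<^sub>C 'a) \<Rightarrow> real \<Rightarrow> 'a"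
  where "picard_step G w d \<phi> t = w + integral {0..max 0 (min d t)} (\<lambda>s. G (\<phi> s))"

lemma picard_step_bcontfun:
  assumes G: "continuous_on UNIV G" and d: "0 \<le> d"
  shows "picard_step G w d \<phi> \<in> bcontfun"
proof -
  have G\<phi>: "continuous_on {0..d} (\<lambda>s. G (\<phi> s))"
    by (rule continuous_on_compose2[OF G]) auto
  have int: "continuous_on {0..d} (\<lambda>u. integral {0..u} (\<lambda>s. G (\<phi> s)))"
    by (intro indefinite_integral_continuous_1 integrable_continuous_interval G\<phi>)
  have "continuous_on UNIV (picard_step G w d \<phi>)"
    unfolding picard_step_def using d
    by (intro continuous_on_add continuous_on_const continuous_on_compose2[OF int])
      (auto intro!: continuous_on_max continuous_on_min continuous_on_const continuous_on_id)
  moreover have "bounded (range (picard_step G w d \<phi>))"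
  proof -
    obtain B where B: "B > 0" "\<forall>s\<in>{0..d}. norm (G (\<phi> s)) \<le> B"
      using compact_imp_bounded[OF compact_continuous_image[OF G\<phi> compact_Icc]]
      by (auto simp: bounded_pos)
    have "norm (picard_step G w d \<phi> t) \<le> norm w + B * d" for t
    proof -
      have "norm (integral {0..max 0 (min d t)} (\<lambda>s. G (\<phi> s))) \<le> B * (max 0 (min d t) - 0)"
        using B d by (intro integral_bound continuous_on_subset[OF G\<phi>]) auto
      also have "\<dots> \<le> B * d" using B(1) d by (intro mult_left_mono) auto
      finally show ?thesis
        unfolding picard_step_def by (rule order_trans[OF norm_triangle_ineq add_left_mono])
    qed
    then show ?thesis by (auto simp: bounded_iff)
  qed
  ultimately show ?thesis by (simp add: bcontfun_def)
qed

lemma picard_step_dist_le: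
  assumes lip: "L-lipschitz_on UNIV G" and d: "0 \<le> d"
  shows "dist (picard_step G w d \<phi> t) (picard_step G w d \<psi> t) \<le> L * d * dist \<phi> \<psi>"
proof -
  let ?u = "max 0 (min d t)"
  have G\<phi>: "continuous_on {0..?u} (\<lambda>s. G (\<rho> s))" for \<rho> :: "real \<Rightarrow>\<^sub>C 'a"
    by (rule continuous_on_compose2[OF lipschitz_on_continuous_on[OF lip]]) auto
  have "dist (picard_step G w d \<phi> t) (picard_step G w d \<psi> t)
      = norm (integral {0..?u} (\<lambda>s. G (\<phi> s) - G (\<psi> s)))"
    unfolding picard_step_def dist_norm
    by (subst integral_diff) (auto intro!: integrable_continuous_interval G\<phi>)
  also have "\<dots> \<le> (L * dist \<phi> \<psi>) * (?u - 0)"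
  proof (intro integral_bound continuous_on_diff G\<phi>)
    fix s
    have "norm (G (\<phi> s) - G (\<psi> s)) \<le> L * dist (\<phi> s) (\<psi> s)"
      using lipschitz_onD[OF lip] by (simp add: dist_norm)
    also have "\<dots> \<le> L * dist \<phi> \<psi>"
      using lipschitz_on_nonneg[OF lip] by (intro mult_left_mono dist_bounded)
    finally show "norm (G (\<phi> s) - G (\<psi> s)) \<le> L * dist \<phi> \<psi>" .
  qed auto
  also have "\<dots> \<le> (L * dist \<phi> \<psi>) * d"
    using d lipschitz_on_nonneg[OF lip] by (intro mult_left_mono) auto
  also have "\<dots> = L * d * dist \<phi> \<psi>" by (simp add: mult_ac)
  finally show ?thesis .
qed

lemma integral_equation_solvable:
  fixes G :: "'a::banach \<Rightarrow> 'a"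
  assumes lip: "L-lipschitz_on UNIV G" and d: "0 \<le> d" "L * d < 1"
  shows "\<exists>z. continuous_on {0..d} z \<and> (\<forall>t\<in>{0..d}. z t = w + integral {0..t} (\<lambda>s. G (z s)))"
proof -
  define T where "T \<phi> = Bcontfun (picard_step G w d \<phi>)" for \<phi>
  have T: "apply_bcontfun (T \<phi>) = picard_step G w d \<phi>" for \<phi>
    unfolding T_def using lipschitz_on_continuous_on[OF lip] d(1)
    by (intro Bcontfun_inverse picard_step_bcontfun)
  have "dist (T \<phi>) (T \<psi>) \<le> (L * d) * dist \<phi> \<psi>" for \<phi> \<psi>
    using picard_step_dist_le[OF lip d(1)] by (intro dist_bound) (simp add: T)
  then obtain z where "T z = z"
    using banach_fix_type[of "L * d" T] lipschitz_on_nonneg[OF lip] d by auto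
  have "apply_bcontfun z t = w + integral {0..t} (\<lambda>s. G (apply_bcontfun z s))" if "t \<in> {0..d}" for t
  proof -
    have "apply_bcontfun z t = picard_step G w d z t" by (metis T \<open>T z = z\<close>)
    also have "\<dots> = w + integral {0..t} (\<lambda>s. G (apply_bcontfun z s))"
      using that by (simp add: picard_step_def)
    finally show ?thesis .
  qed
  then show ?thesis by blast
qed

lemma local_solution_exists:
  fixes F :: "'c::euclidean_space \<Rightarrow> 'c"
  assumes lip: "L-lipschitz_on (cball w 1) F"
  shows "\<exists>d>0. \<exists>z. z 0 = w \<and> (\<forall>t\<in>{0..d}. (z has_vector_derivative F (z t)) (at t within {0..d}))"
proof -
  \<comment> \<open>composing with the projection onto the ball makes the field globally Lipschitz\<close>
  define P where "P = closest_point (cball w 1)"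
  have P_in: "P x \<in> cball w 1" for x
    unfolding P_def by (rule closest_point_in_set) auto
  have "1-lipschitz_on UNIV P"
    unfolding P_def by (intro lipschitz_onI) (simp_all add: closest_point_lipschitz)
  moreover have "L-lipschitz_on (range P) F"
    using lip P_in by (blast intro: lipschitz_on_subset)
  ultimately have G_lip: "L-lipschitz_on UNIV (\<lambda>x. F (P x))"
    using lipschitz_on_compose2 by fastforce
  have "bounded (F ` cball w 1)"
    by (intro compact_imp_bounded compact_continuous_image lipschitz_on_continuous_on[OF lip]) auto
  then obtain M where M: "M > 0" "\<And>x. x \<in> cball w 1 \<Longrightarrow> norm (F x) \<le> M"
    by (auto simp: bounded_pos)
  have L: "L \<ge> 0" using lipschitz_on_nonneg[OF lip] .
  define d where "d = min (1 / M) (1 / (L + 1))"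
  have d: "d > 0" "M * d \<le> 1" "L * d < 1"
    using M L by (auto simp: d_def min_def field_simps)
  obtain z where z_cont: "continuous_on {0..d} z"
    and z_eq: "\<And>t. t \<in> {0..d} \<Longrightarrow> z t = w + integral {0..t} (\<lambda>s. F (P (z s)))"
    using integral_equation_solvable[OF G_lip, of d w] d by auto
  have FP_cont: "continuous_on {0..d} (\<lambda>s. F (P (z s)))"
    using lipschitz_on_continuous_on[OF G_lip] z_cont by (rule continuous_on_compose2) auto
  \<comment> \<open>the solution never leaves the ball, where the projection is the identity\<close>
  have z_in: "z t \<in> cball w 1" if t: "t \<in> {0..d}" for t
  proof -
    have "norm (integral {0..t} (\<lambda>s. F (P (z s)))) \<le> M * (t - 0)"
      using t P_in M(2) by (intro integral_bound continuous_on_subset[OF FP_cont]) auto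
    also have "\<dots> \<le> 1" using t d M(1) by (metis atLeastAtMost_iff diff_zero mult_left_mono order_trans less_imp_le)
    finally show ?thesis using z_eq[OF t] by (simp add: dist_norm)
  qed
  have "(z has_vector_derivative F (z t)) (at t within {0..d})" if t: "t \<in> {0..d}" for t
  proof (rule has_vector_derivative_transform[OF t])
    show "z s = w + integral {0..s} (\<lambda>s. F (P (z s)))" if "s \<in> {0..d}" for s
      using z_eq[OF that] .
    show "((\<lambda>s. w + integral {0..s} (\<lambda>s. F (P (z s)))) has_vector_derivative F (z t)) (at t within {0..d})"
      using integral_has_vector_derivative[OF FP_cont t] z_in[OF t]
      by (auto intro!: derivative_eq_intros simp: P_def closest_point_self)
  qed
  moreover have "z 0 = w" using z_eq[of 0] d by simp
  ultimately show ?thesis using d by blast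
qed

lemma is_invariant_frechet_derivative_eq_0:
  fixes F :: "'c::euclidean_space \<Rightarrow> 'c" and I :: "'c \<Rightarrow> real"
  assumes inv: "is_invariant F I" and lip: "L-lipschitz_on (cball w 1) F"
    and I: "I differentiable (at w)"
  shows "frechet_derivative I (at w) (F w) = 0"
proof -
  obtain d z where d: "d > 0" and z0: "z 0 = w"
    and z: "\<And>t. t \<in> {0..d} \<Longrightarrow> (z has_vector_derivative F (z t)) (at t within {0..d})"
    using local_solution_exists[OF lip] by blast
  have 0: "0 \<in> {0..d}" using d by simp
  have "((I \<circ> z) has_vector_derivative frechet_derivative I (at w) (F w)) (at 0 within {0..d})"
  proof -
    have "(I has_derivative frechet_derivative I (at w)) (at (z 0) within z ` {0..d})"
      using I z0 by (simp add: frechet_derivative_works has_derivative_at_withinI)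
    from vector_derivative_diff_chain_within[OF z[OF 0] this] show ?thesis by (simp add: z0)
  qed
  moreover have "((I \<circ> z) has_vector_derivative 0) (at 0 within {0..d})"
  proof (rule has_vector_derivative_transform[OF 0 _ has_vector_derivative_const])
    have "is_interval {0..d}" by (rule is_interval_cc)
    then show "(I \<circ> z) s = I w" if "s \<in> {0..d}" for s
      using inv z that 0 z0 unfolding is_invariant_def o_def by blast
  qed
  ultimately show ?thesis
    using vector_derivative_unique_within_closed_interval[of 0 d 0] d by simp
qed

lemma norm_sum_power_scaleR_le:
  fixes x :: "nat \<Rightarrow> 'a::real_normed_vector"
  assumes h: "0 \<le> h" "h \<le> 1" and J: "\<And>j. j \<in> J \<Longrightarrow> r \<le> j"
  shows "norm (\<Sum>j\<in>J. h ^ j *\<^sub>R x j) \<le> h ^ r * (\<Sum>j\<in>J. norm (x j))"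
proof -
  have "norm (\<Sum>j\<in>J. h ^ j *\<^sub>R x j) \<le> (\<Sum>j\<in>J. h ^ j * norm (x j))"
    using h by (auto intro!: order_trans[OF norm_sum] sum_mono)
  also have "\<dots> \<le> (\<Sum>j\<in>J. h ^ r * norm (x j))"
    using h J by (intro sum_mono mult_right_mono power_decreasing) auto
  finally show ?thesis by (simp add: sum_distrib_left)
qed

lemma compact_continuous_real_bound:
  fixes f :: "'a::topological_space \<Rightarrow> real"
  assumes "compact S" and "continuous_on S f"
  obtains B where "B \<ge> 0" and "\<And>t. t \<in> S \<Longrightarrow> f t \<le> B"
proof -
  have "bounded (f ` S)" using assms by (intro compact_imp_bounded compact_continuous_image)
  then obtain B where "B > 0" "\<And>t. t \<in> S \<Longrightarrow> \<bar>f t\<bar> \<le> B" by (auto simp: bounded_pos)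
  then have "B \<ge> 0" "\<And>t. t \<in> S \<Longrightarrow> f t \<le> B" by (auto dest: abs_le_D1)
  then show ?thesis by (rule that)
qed

lemma expansion_has_vector_derivative:
  assumes z: "(z has_vector_derivative F (z t)) (at t within S)"
    and e: "\<And>j. j \<in> J \<Longrightarrow> (e j has_vector_derivative A (e j t) - W j t) (at t within S)"
    and A: "linear A"
    and I: "(I has_derivative DI) (at (z t + (\<Sum>j\<in>J. h ^ j *\<^sub>R e j t)))"
  shows "((\<lambda>s. I (z s + (\<Sum>j\<in>J. h ^ j *\<^sub>R e j s))) has_vector_derivative
           DI (F (z t) + A (\<Sum>j\<in>J. h ^ j *\<^sub>R e j t) - (\<Sum>j\<in>J. h ^ j *\<^sub>R W j t))) (at t within S)"
proof -
  have "((\<lambda>s. z s + (\<Sum>j\<in>J. h ^ j *\<^sub>R e j s)) has_vector_derivative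
          F (z t) + (\<Sum>j\<in>J. h ^ j *\<^sub>R (A (e j t) - W j t))) (at t within S)"
    using z e by (intro has_vector_derivative_add has_vector_derivative_sum
        bounded_linear.has_vector_derivative[OF bounded_linear_scaleR_right]) auto
  moreover have "F (z t) + (\<Sum>j\<in>J. h ^ j *\<^sub>R (A (e j t) - W j t))
      = F (z t) + A (\<Sum>j\<in>J. h ^ j *\<^sub>R e j t) - (\<Sum>j\<in>J. h ^ j *\<^sub>R W j t)"
    using A by (simp add: linear_sum linear_scale scaleR_diff_right sum_subtractf)
  ultimately show ?thesis
    using vector_derivative_diff_chain_within[of _ _ t S I DI] I
    by (auto simp: o_def intro: has_derivative_at_withinI)
qed

lemma invariant_defect_le:
  fixes F :: "'c::real_normed_vector \<Rightarrow> 'c" and DI :: "'c \<Rightarrow> 'c \<Rightarrow> real"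
  assumes lin: "linear (DI (x + e))"
    and inv: "DI (x + e) (F (x + e)) = 0"
    and taylor: "norm (F (x + e) - F x - DF e) \<le> LF * norm e ^ 2"
    and bound: "\<And>v. \<bar>DI (x + e) v\<bar> \<le> BI * norm v" and BI: "BI \<ge> 0"
    and lip: "\<bar>DI (x + e) w - DI x w\<bar> \<le> LI * norm e * norm w"
  shows "\<bar>DI (x + e) (F x + DF e - w) + DI x w\<bar> \<le> BI * (LF * norm e ^ 2) + LI * norm e * norm w"
proof -
  have "DI (x + e) (F x + DF e - w) + DI x w
      = - DI (x + e) (F (x + e) - F x - DF e) - (DI (x + e) w - DI x w)"
    using lin inv by (simp add: linear_diff linear_add)
  also have "\<bar>\<dots>\<bar> \<le> BI * norm (F (x + e) - F x - DF e) + LI * norm e * norm w"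
    using bound lip by (smt (verit))
  also have "\<dots> \<le> BI * (LF * norm e ^ 2) + LI * norm e * norm w"
    using taylor BI by (simp add: mult_left_mono)
  finally show ?thesis .
qed

lemma invariant_defect_quadratic:
  fixes F :: "'c::euclidean_space \<Rightarrow> 'c" and I :: "'c \<Rightarrow> real"
  assumes F: "Ck 2 F" and I: "Ck 2 I"
    and inv: "\<And>y. frechet_derivative I (at y) (F y) = 0"
    and K: "compact K" "convex K"
  shows "\<exists>M\<ge>0. \<forall>x\<in>K. \<forall>e w. x + e \<in> K \<longrightarrow>
    \<bar>frechet_derivative I (at (x + e)) (F x + frechet_derivative F (at x) e - w)
      + frechet_derivative I (at x) w\<bar> \<le> M * (norm e ^ 2 + norm e * norm w)"
proof -
  define DI where "DI x = frechet_derivative I (at x)" for x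
  define DF where "DF x = frechet_derivative F (at x)" for x
  have "Ck 1 I" by (rule Ck_Suc_imp_Ck) (use I in \<open>simp add: numeral_2_eq_2\<close>)
  then obtain BI where BI: "BI \<ge> 0" "\<And>x v. x \<in> K \<Longrightarrow> norm (DI x v) \<le> BI * norm v"
    using Ck_frechet_derivative_bounded[OF _ K(1)] unfolding DI_def by blast
  obtain LI where LI: "LI \<ge> 0"
    "\<And>x y v. x \<in> K \<Longrightarrow> y \<in> K \<Longrightarrow> norm (DI x v - DI y v) \<le> LI * norm (x - y) * norm v"
    using Ck_frechet_derivative_lipschitz[OF I K] by (auto simp: DI_def)
  obtain LF where LF: "LF \<ge> 0"
    "\<And>x y v. x \<in> K \<Longrightarrow> y \<in> K \<Longrightarrow> norm (DF x v - DF y v) \<le> LF * norm (x - y) * norm v"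
    using Ck_frechet_derivative_lipschitz[OF F K] by (auto simp: DF_def)
  have "\<bar>DI (x + e) (F x + DF x e - w) + DI x w\<bar> \<le> (BI * LF + LI) * (norm e ^ 2 + norm e * norm w)"
    if x: "x \<in> K" "x + e \<in> K" for x e w
  proof -
    have "(F has_derivative DF y) (at y within K)" for y
      using Ck_has_derivative[of 1 F y] F by (simp add: DF_def numeral_2_eq_2 has_derivative_at_withinI)
    then have "norm (F (x + e) - F x - DF x e) \<le> LF * norm e ^ 2"
      using K(2) x LF by (intro has_derivative_remainder_le) auto
    moreover have "linear (DI (x + e))"
      unfolding DI_def using I by (intro has_derivative_linear[OF Ck_has_derivative[of 1]]) (simp add: numeral_2_eq_2)
    ultimately have "\<bar>DI (x + e) (F x + DF x e - w) + DI x w\<bar> \<le> BI * (LF * norm e ^ 2) + LI * norm e * norm w"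
      using BI LI(2)[OF x(2) x(1)] x by (intro invariant_defect_le) (auto simp: inv DI_def)
    also have "\<dots> \<le> (BI * LF + LI) * (norm e ^ 2 + norm e * norm w)"
      using BI LF LI by (simp add: algebra_simps add_mono)
    finally show ?thesis .
  qed
  moreover have "BI * LF + LI \<ge> 0" using BI LF LI by simp
  ultimately show ?thesis unfolding DI_def DF_def by blast
qed

lemma quadratic_at_expansion_le:
  fixes e W :: "nat \<Rightarrow> 'a::real_normed_vector" and \<Phi> :: "'a \<Rightarrow> 'a \<Rightarrow> real"
  assumes h: "0 \<le> h" "h \<le> 1" and J: "\<And>j. j \<in> J \<Longrightarrow> r \<le> j"
    and B: "(\<Sum>j\<in>J. norm (e j)) \<le> B" "(\<Sum>j\<in>J. norm (W j)) \<le> B"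
    and \<Phi>: "\<And>u w. norm u \<le> B \<Longrightarrow> \<Phi> u w \<le> M * (norm u ^ 2 + norm u * norm w)" and M: "M \<ge> 0"
  shows "\<Phi> (\<Sum>j\<in>J. h ^ j *\<^sub>R e j) (\<Sum>j\<in>J. h ^ j *\<^sub>R W j) \<le> 2 * M * B ^ 2 * h ^ (2 * r)"
proof -
  define u where "u = (\<Sum>j\<in>J. h ^ j *\<^sub>R e j)"
  define w where "w = (\<Sum>j\<in>J. h ^ j *\<^sub>R W j)"
  have hr: "0 \<le> h ^ r" "h ^ r \<le> 1" using h by (simp_all add: power_le_one)
  have "0 \<le> B" using B(1) order_trans[OF sum_nonneg] by (metis norm_ge_zero)
  have u: "norm u \<le> h ^ r * B"
    unfolding u_def by (rule order_trans[OF norm_sum_power_scaleR_le[OF h J] mult_left_mono[OF B(1) hr(1)]])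
  have w: "norm w \<le> h ^ r * B"
    unfolding w_def by (rule order_trans[OF norm_sum_power_scaleR_le[OF h J] mult_left_mono[OF B(2) hr(1)]])
  have "norm u \<le> B" using u mult_left_le_one_le[OF \<open>0 \<le> B\<close> hr] by linarith
  then have "\<Phi> u w \<le> M * (norm u ^ 2 + norm u * norm w)" by (rule \<Phi>)
  also have "\<dots> \<le> M * ((h ^ r * B) ^ 2 + (h ^ r * B) * (h ^ r * B))"
    using u w M hr \<open>0 \<le> B\<close> by (intro mult_left_mono add_mono mult_mono power_mono) simp_all
  also have "\<dots> = 2 * M * B ^ 2 * h ^ (2 * r)"
  proof -
    have "h ^ (2 * r) = h ^ r * h ^ r" by (simp add: mult_2 power_add)
    then show ?thesis by (simp add: power2_eq_square algebra_simps)
  qed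
  finally show ?thesis unfolding u_def w_def .
qed

lemma invariant_rate_along_expansion:
  fixes F :: "'c::euclidean_space \<Rightarrow> 'c" and I :: "'c \<Rightarrow> real"
    and z :: "real \<Rightarrow> 'c" and e W :: "nat \<Rightarrow> real \<Rightarrow> 'c"
  assumes F: "Ck 2 F" and I: "Ck 2 I"
    and inv: "\<And>x. frechet_derivative I (at x) (F x) = 0"
    and S: "compact S" and J: "\<And>j. j \<in> J \<Longrightarrow> r \<le> j"
    and z: "\<And>t. t \<in> S \<Longrightarrow> (z has_vector_derivative F (z t)) (at t within S)"
    and e: "\<And>j t. j \<in> J \<Longrightarrow> t \<in> S \<Longrightarrow>
      (e j has_vector_derivative frechet_derivative F (at (z t)) (e j t) - W j t) (at t within S)"
    and W: "\<And>j. j \<in> J \<Longrightarrow> continuous_on S (W j)"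
  shows "\<exists>C. \<forall>h t. 0 \<le> h \<longrightarrow> h \<le> 1 \<longrightarrow> t \<in> S \<longrightarrow> (\<exists>D.
    ((\<lambda>s. I (z s + (\<Sum>j\<in>J. h ^ j *\<^sub>R e j s))) has_vector_derivative D) (at t within S) \<and>
    \<bar>D + (\<Sum>j\<in>J. h ^ j * frechet_derivative I (at (z t)) (W j t))\<bar> \<le> C * h ^ (2 * r))"
proof -
  define DI where "DI x = frechet_derivative I (at x)" for x
  define DF where "DF x = frechet_derivative F (at x)" for x
  have I_deriv: "(I has_derivative DI x) (at x)" for x
    using Ck_has_derivative[of 1 I] I by (simp add: DI_def numeral_2_eq_2)
  have "continuous_on S z" using z by (rule continuous_on_vector_derivative)
  moreover have "continuous_on S (e j)" if "j \<in> J" for j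
    using e[OF that] by (rule continuous_on_vector_derivative)
  ultimately have "continuous_on S (\<lambda>t. norm (z t) + (\<Sum>j\<in>J. norm (e j t)) + (\<Sum>j\<in>J. norm (W j t)))"
    using W by (intro continuous_on_add continuous_on_norm continuous_on_sum) auto
  then obtain B where B: "\<And>t. t \<in> S \<Longrightarrow> norm (z t) + (\<Sum>j\<in>J. norm (e j t)) + (\<Sum>j\<in>J. norm (W j t)) \<le> B"
    using compact_continuous_real_bound[OF S] by blast
  obtain M where M: "M \<ge> 0" "\<forall>x\<in>cball 0 (2 * B). \<forall>u w. x + u \<in> cball 0 (2 * B) \<longrightarrow>
      \<bar>DI (x + u) (F x + DF x u - w) + DI x w\<bar> \<le> M * (norm u ^ 2 + norm u * norm w)"
    using invariant_defect_quadratic[OF F I inv compact_cball convex_cball] unfolding DI_def DF_def by blast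
  have "\<exists>D. ((\<lambda>s. I (z s + (\<Sum>j\<in>J. h ^ j *\<^sub>R e j s))) has_vector_derivative D) (at t within S) \<and>
    \<bar>D + (\<Sum>j\<in>J. h ^ j * DI (z t) (W j t))\<bar> \<le> 2 * M * B ^ 2 * h ^ (2 * r)"
    if h: "0 \<le> h" "h \<le> 1" and t: "t \<in> S" for h t
  proof -
    define E where "E = (\<Sum>j\<in>J. h ^ j *\<^sub>R e j t)"
    define w where "w = (\<Sum>j\<in>J. h ^ j *\<^sub>R W j t)"
    have "0 \<le> (\<Sum>j\<in>J. norm (e j t))" "0 \<le> (\<Sum>j\<in>J. norm (W j t))"
      by (simp_all add: sum_nonneg)
    then have Bt: "norm (z t) \<le> B" "(\<Sum>j\<in>J. norm (e j t)) \<le> B" "(\<Sum>j\<in>J. norm (W j t)) \<le> B"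
      using B[OF t] norm_ge_zero[of "z t"] by linarith+
    have \<Phi>: "\<bar>DI (z t + u) (F (z t) + DF (z t) u - w) + DI (z t) w\<bar> \<le> M * (norm u ^ 2 + norm u * norm w)"
      if "norm u \<le> B" for u w
    proof -
      have "norm (z t) \<le> 2 * B" "norm (z t + u) \<le> 2 * B"
        using Bt(1) that norm_triangle_ineq[of "z t" u] norm_ge_zero[of u] by linarith+
      then have "z t \<in> cball 0 (2 * B)" "z t + u \<in> cball 0 (2 * B)" by simp_all
      then show ?thesis using M(2) by blast
    qed
    have "\<bar>DI (z t + E) (F (z t) + DF (z t) E - w) + DI (z t) w\<bar> \<le> 2 * M * B ^ 2 * h ^ (2 * r)"
      unfolding E_def w_def
      by (rule quadratic_at_expansion_le[OF h J Bt(2,3) \<Phi> M(1)])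
    moreover have "((\<lambda>s. I (z s + (\<Sum>j\<in>J. h ^ j *\<^sub>R e j s))) has_vector_derivative
        DI (z t + E) (F (z t) + DF (z t) E - w)) (at t within S)"
      unfolding E_def w_def DF_def using z e t F I_deriv
      by (intro expansion_has_vector_derivative linear_frechet_derivative) (auto simp: numeral_2_eq_2)
    moreover have "(\<Sum>j\<in>J. h ^ j * DI (z t) (W j t)) = DI (z t) w"
      using has_derivative_linear[OF I_deriv] by (simp add: w_def linear_sum linear_scale)
    ultimately show ?thesis by (metis (no_types, lifting))
  qed
  then show ?thesis unfolding DI_def by blast
qed

lemma smooth_curve_on_continuous_vderivs:
  assumes "smooth_curve_on S y"
  shows "continuous_on S (vderivs S k y)"
  using assms unfolding smooth_curve_on_def by (blast intro: continuous_on_vector_derivative)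

theorem lemma1:
  fixes f :: "'a::euclidean_space \<times> 'b::euclidean_space \<Rightarrow> 'a"
    and g :: "'a \<times> 'b \<Rightarrow> 'b"
    and p :: "real \<Rightarrow> 'a" and q :: "real \<Rightarrow> 'b"
    and p0 :: 'a and q0 :: 'b and t0 a b :: real
    and r :: nat and cp cq :: "nat \<Rightarrow> real"
    and ep :: "nat \<Rightarrow> real \<Rightarrow> 'a" and eq :: "nat \<Rightarrow> real \<Rightarrow> 'b"
    and I :: "'a \<times> 'b \<Rightarrow> real"
  assumes ab: "a < b" and t0: "t0 \<in> {a..b}"
    and r: "r \<ge> 1"
    and f_smooth: "smooth_map f" and g_smooth: "smooth_map g"
    and p_smooth: "smooth_curve_on {a..b} p" and q_smooth: "smooth_curve_on {a..b} q"
    and p_ode: "\<forall>t\<in>{a..b}. (p has_vector_derivative f (p t, q t)) (at t within {a..b})"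
    and q_ode: "\<forall>t\<in>{a..b}. (q has_vector_derivative g (p t, q t)) (at t within {a..b})"
    and init: "p t0 = p0" "q t0 = q0"
    and ep_smooth: "\<forall>j\<in>{r..2*r-1}. smooth_curve_on {a..b} (ep j)"
    and eq_smooth: "\<forall>j\<in>{r..2*r-1}. smooth_curve_on {a..b} (eq j)"
    and ep_ode: "\<forall>j\<in>{r..2*r-1}. \<forall>t\<in>{a..b}. (ep j has_vector_derivative
        (frechet_derivative f (at (p t, q t)) (ep j t, eq j t)
          - cp j *\<^sub>R vderivs {a..b} (Suc j) p t)) (at t within {a..b})"
    and eq_ode: "\<forall>j\<in>{r..2*r-1}. \<forall>t\<in>{a..b}. (eq j has_vector_derivative
        (frechet_derivative g (at (p t, q t)) (ep j t, eq j t)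
          - cq j *\<^sub>R vderivs {a..b} (Suc j) q t)) (at t within {a..b})"
    and I_smooth: "smooth_map I"
    and I_inv: "is_invariant (\<lambda>z. (f z, g z)) I"
  shows "\<exists>C h0. h0 > 0 \<and> (\<forall>h. 0 < h \<and> h \<le> h0 \<longrightarrow> (\<forall>t\<in>{a..b}. \<exists>D.
           ((\<lambda>s. I (p s + (\<Sum>j=r..2*r-1. h ^ j *\<^sub>R ep j s),
                     q s + (\<Sum>j=r..2*r-1. h ^ j *\<^sub>R eq j s)))
              has_vector_derivative D) (at t within {a..b}) \<and>
           \<bar>D - (- (\<Sum>j=r..2*r-1. h ^ j * frechet_derivative I (at (p t, q t))
                     (cp j *\<^sub>R vderivs {a..b} (Suc j) p t,
                      cq j *\<^sub>R vderivs {a..b} (Suc j) q t)))\<bar> \<le> C * h ^ (2*r)))"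
proof -
  \<comment> \<open>\<open>a < b\<close>, \<open>r \<ge> 1\<close>, the initial values and the smoothness of the \<open>e\<^sub>j\<close> are not needed\<close>
  let ?S = "{a..b}" and ?J = "{r..2*r-1}"
  define F where "F z = (f z, g z)" for z
  define W where "W j t = (cp j *\<^sub>R vderivs ?S (Suc j) p t, cq j *\<^sub>R vderivs ?S (Suc j) q t)" for j t
  have F: "Ck k F" and I: "Ck k I" for k
    unfolding F_def using f_smooth g_smooth I_smooth by (auto intro: Ck_Pair simp: smooth_map_def)
  have DF: "frechet_derivative F (at x) v = (frechet_derivative f (at x) v, frechet_derivative g (at x) v)" for x v
    using f_smooth g_smooth unfolding F_def smooth_map_def
    by (subst frechet_derivative_Pair) (metis Ck.simps(2))+
  have inv: "frechet_derivative I (at x) (F x) = 0" for x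
  proof -
    obtain L where "L-lipschitz_on (cball x 1) F"
      using Ck_lipschitz_on[OF F compact_cball convex_cball] by blast
    moreover have "I differentiable (at x)"
      using Ck_has_derivative[OF I[of "Suc 0"]] by (rule differentiableI)
    ultimately show ?thesis by (rule is_invariant_frechet_derivative_eq_0[OF I_inv[folded F_def]])
  qed
  obtain C where C: "\<And>h t. 0 \<le> h \<Longrightarrow> h \<le> 1 \<Longrightarrow> t \<in> ?S \<Longrightarrow> \<exists>D.
    ((\<lambda>s. I ((p s, q s) + (\<Sum>j\<in>?J. h ^ j *\<^sub>R (ep j s, eq j s)))) has_vector_derivative D) (at t within ?S) \<and>
    \<bar>D + (\<Sum>j\<in>?J. h ^ j * frechet_derivative I (at (p t, q t)) (W j t))\<bar> \<le> C * h ^ (2 * r)"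
  proof (atomize_elim, rule invariant_rate_along_expansion[OF F I inv compact_Icc])
    show "((\<lambda>t. (p t, q t)) has_vector_derivative F (p t, q t)) (at t within ?S)" if "t \<in> ?S" for t
      using p_ode q_ode that by (simp add: F_def has_vector_derivative_Pair)
    show "((\<lambda>t. (ep j t, eq j t)) has_vector_derivative
        frechet_derivative F (at (p t, q t)) (ep j t, eq j t) - W j t) (at t within ?S)"
      if "j \<in> ?J" "t \<in> ?S" for j t
      using ep_ode eq_ode that by (simp add: DF W_def has_vector_derivative_Pair)
    show "continuous_on ?S (W j)" for j
      unfolding W_def
      by (intro continuous_on_Pair continuous_on_scaleR continuous_on_const
          smooth_curve_on_continuous_vderivs p_smooth q_smooth)
  qed auto
  have pair_sum: "(p s, q s) + (\<Sum>j\<in>?J. h ^ j *\<^sub>R (ep j s, eq j s))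
      = (p s + (\<Sum>j\<in>?J. h ^ j *\<^sub>R ep j s), q s + (\<Sum>j\<in>?J. h ^ j *\<^sub>R eq j s))" for h s
    by (simp add: prod_eq_iff fst_sum snd_sum)
  show ?thesis
    using C[unfolded pair_sum] by (intro exI[of _ C] exI[of _ 1]) (auto simp: W_def)
qed

end
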